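(* Let $S_\psi\subset\mathbb{R}^3$ be the surface of revolution parametrized by $(r,\theta)\mapsto(\psi(r)\cos\theta,\psi(r)\sin\theta,\chi(r))$, $(r,\theta)\in[r_1,r_2]\times[0,2\pi)$, and let $\Omega=\{(\psi(r)\cos\theta,\psi(r)\sin\theta,\chi(r)) : r\in[0,a],\ \theta\in(0,2\pi]\}$ with $r_1\le0<a\le r_2$. Let $0<R_1<R_2<a$, $\beta>0$, $B>\overline B:=\max_{[0,a]}|(\psi'/\psi)'|$, let $z_1$ be the solution of $\big[\frac{(\psi z)'}{\psi}\big]'-Bz=0$ in $[0,R_1)$ with $z(0)=0$, $z'(0)=1$, let $z_2$ be the solution of the same equation in $(R_2,a]$ with $z(a)=\beta$, $z'(a)=-1$, and let $z=z_\beta$ be defined by $z=z_1$ on $[0,R_1)$, $z=z_3$ on $[R_1,R_2]$, $z=z_2$ on $(R_2,a]$, where $z_3$ is any positive smooth function such that $z$ is smooth on $[0,a]$. Then there exists $f\in C^1(\mathbb{R})$ such that $Z(r):=\int_0^rz(s)\,ds$ ($r\in[0,a]$) is a stationary solution of $$\Delta Z+f(Z)=0\text{ in }\Omega,\qquad\frac{\partial Z}{\partial\nu}+\alpha Z=0\text{ on }\partial\Omega,\qquad\text{with }\ \alpha=-\frac{\beta}{\int_0^az(r)\,dr},$$ and $Z$ satisfies $$L_a\big[H_a\alpha^2Z(a)^2+\alpha Z(a)f(Z(a))+\alpha^3Z(a)^2\big]+L_0\big[H_0\alpha^2Z(0)^2+\alpha Z(0)f(Z(0))+\alpha^3Z(0)^2\big]<0,$$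 where $L_0=2\pi\psi(0)$, $L_a=2\pi\psi(a)$, $H_a=-\frac{\psi'(a)}{\psi(a)}$, $H_0=\frac{\psi'(0)}{\psi(0)}$.
   Context: Here $r\mapsto(\psi(r),\chi(r))$ is a simple regular plane curve, $\psi\in C^2([r_1,r_2])$, $\psi>0$ on $[r_1,r_2]$, $(\psi')^2+(\chi')^2=1$, and $\chi'(0)>0$, $\chi'(a)>0$. $S_\psi$ carries the metric $dr^2+\psi(r)^2d\theta^2$, with Laplace–Beltrami operator $\Delta u=u_{rr}+\frac{\psi'}{\psi}u_r+\frac1{\psi^2}u_{\theta\theta}$; $\partial\Omega$ consists of the circles $r=0$ and $r=a$ with outer unit normal $\nu=-\partial_r$ on $r=0$ and $\nu=\partial_r$ on $r=a$. A radial function $Z(r)$ is viewed as a function on $\Omega$. *)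

theory Defs
  imports "HOL-Analysis.Analysis"
begin

text \<open>Laplace--Beltrami operator of the metric dr^2 + psi(r)^2 dtheta^2 on S_psi,
  written in the coordinates (r, theta), applied to u r theta.\<close>
definition LB_laplacian :: "(real \<Rightarrow> real) \<Rightarrow> (real \<Rightarrow> real \<Rightarrow> real) \<Rightarrow> real \<Rightarrow> real \<Rightarrow> real" where
  "LB_laplacian psi u r \<theta> =
     deriv (\<lambda>s. deriv (\<lambda>t. u t \<theta>) s) r
     + deriv psi r / psi r * deriv (\<lambda>t. u t \<theta>) r
     + 1 / (psi r)^2 * deriv (\<lambda>s. deriv (\<lambda>t. u r t) s) \<theta>"

text \<open>u (in coordinates (r,theta), r in [0,a], theta in (0,2pi]) is a (classical) stationary
  solution of  Delta u + f(u) = 0 in Omega,  du/dnu + alpha u = 0 on dOmega,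
  where dOmega = {r = 0} (nu = -d/dr) union {r = a} (nu = d/dr).\<close>
definition stationary_solution ::
  "(real \<Rightarrow> real) \<Rightarrow> real \<Rightarrow> (real \<Rightarrow> real) \<Rightarrow> real \<Rightarrow> (real \<Rightarrow> real \<Rightarrow> real) \<Rightarrow> bool" where
  "stationary_solution psi a f alpha u \<longleftrightarrow>
     (\<forall>r \<theta>. 0 < r \<and> r < a \<and> 0 < \<theta> \<and> \<theta> \<le> 2 * pi \<longrightarrow>
        (\<lambda>t. u t \<theta>) differentiable (at r) \<and> deriv (\<lambda>t. u t \<theta>) differentiable (at r) \<and>
        (\<lambda>t. u r t) differentiable (at \<theta>) \<and> deriv (\<lambda>t. u r t) differentiable (at \<theta>) \<and>
        LB_laplacian psi u r \<theta> + f (u r \<theta>) = 0) \<and>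
     (\<forall>\<theta>. 0 < \<theta> \<and> \<theta> \<le> 2 * pi \<longrightarrow>
        (\<exists>d. ((\<lambda>t. u t \<theta>) has_real_derivative d) (at 0 within {0..a}) \<and> - d + alpha * u 0 \<theta> = 0)) \<and>
     (\<forall>\<theta>. 0 < \<theta> \<and> \<theta> \<le> 2 * pi \<longrightarrow>
        (\<exists>d. ((\<lambda>t. u t \<theta>) has_real_derivative d) (at a within {0..a}) \<and> d + alpha * u a \<theta> = 0))"

definition C1_real :: "(real \<Rightarrow> real) \<Rightarrow> bool" where
  "C1_real f \<longleftrightarrow> (\<exists>f'. (\<forall>x. (f has_real_derivative f' x) (at x)) \<and> continuous_on UNIV f')"

end

theory Submission
  imports Defs
begin

text \<open>For the radial function \<open>Z\<close> the Laplacian is the flux \<open>g = (\<psi> z)'/\<psi> = z' + (\<psi>'/\<psi>) z\<close>.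
  At a positive critical point of \<open>z\<close> in the region where the ODE holds, the ODE gives
  \<open>z'' = (B - (\<psi>'/\<psi>)') z > 0\<close>, so by a maximum principle \<open>z > 0\<close> on \<open>(0, a]\<close>. Hence \<open>Z\<close> is a
  strictly increasing bijection of \<open>[0, a]\<close> onto \<open>[0, Z a]\<close> and \<open>f = - g \<circ> Z\<inverse>\<close> solves
  \<open>\<Delta>Z + f(Z) = 0\<close>. Where the ODE holds, \<open>g' = B z = B Z'\<close>, so \<open>g\<close> is affine in \<open>Z\<close> near both
  ends and \<open>f\<close> extends affinely to a \<open>C\<^sup>1\<close> function on the real line. The Robin condition at \<open>a\<close>
  forces \<open>\<alpha> Z(a) = -\<beta>\<close>; the boundary term at \<open>0\<close> vanishes since \<open>Z(0) = 0\<close>, and the one at \<open>a\<close>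
  reduces to \<open>-\<beta> + \<alpha> \<beta>\<^sup>2 < 0\<close>.\<close>

lemma has_real_derivative_unique_Icc:
  fixes f :: "real \<Rightarrow> real"
  assumes "a < b" "x \<in> {a..b}"
    and "(f has_real_derivative d1) (at x within {a..b})"
    and "(f has_real_derivative d2) (at x within {a..b})"
  shows "d1 = d2"
  using vector_derivative_unique_within_closed_interval[of a b x f d1 d2] assms
  by (simp add: has_real_derivative_iff_has_vector_derivative)

lemma critical_point_pos_second_deriv_increases:
  fixes w w' :: "real \<Rightarrow> real"
  assumes "m < u"
    and w': "\<And>t. t \<in> {m..u} \<Longrightarrow> (w has_real_derivative w' t) (at t)"
    and w'': "(w' has_real_derivative l) (at m)" "0 < l"
    and critical: "w' m = 0"
  shows "\<exists>y\<in>{m<..u}. w m < w y"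
proof -
  obtain d where d: "0 < d" "\<And>h. 0 < h \<Longrightarrow> h < d \<Longrightarrow> w' m < w' (m + h)"
    using DERIV_pos_inc_right[OF w''] by auto
  define h where "h = min (d/2) (u - m)"
  have h: "0 < h" "h < d" "m + h \<le> u"
    using d(1) assms(1) by (auto simp: h_def)
  obtain \<xi> where \<xi>: "m < \<xi>" "\<xi> < m + h" "w (m + h) - w m = h * w' \<xi>"
    using MVT2[of m "m + h" w w'] h w' by auto
  have "0 < w' \<xi>"
    using d(2)[of "\<xi> - m"] \<xi> h critical by auto
  then have "w m < w (m + h)"
    using \<xi>(3) h(1) by (simp add: algebra_simps)
  then show ?thesis
    using h by (intro bexI[of _ "m + h"]) auto
qed

lemma max_principle_Icc:
  fixes w w' w'' :: "real \<Rightarrow> real"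
  assumes "l < u" "continuous_on {l..u} w"
    and w': "\<And>t. t \<in> {l<..<u} \<Longrightarrow> (w has_real_derivative w' t) (at t)"
    and w'': "\<And>t. t \<in> {l<..<u} \<Longrightarrow> (w' has_real_derivative w'' t) (at t)"
    and convex_at_critical: "\<And>t. t \<in> {l<..<u} \<Longrightarrow> 0 < w t \<Longrightarrow> w' t = 0 \<Longrightarrow> 0 < w'' t"
    and t: "t \<in> {l..u}"
  shows "w t \<le> max 0 (max (w l) (w u))"
proof -
  obtain m where m: "m \<in> {l..u}" "\<And>y. y \<in> {l..u} \<Longrightarrow> w y \<le> w m"
    using continuous_attains_sup[of "{l..u}" w] assms(1,2) by auto
  have "w m \<le> max 0 (max (w l) (w u))"
  proof (rule ccontr)
    assume "\<not> ?thesis"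
    then have pos: "0 < w m" and "m \<noteq> l" "m \<noteq> u"
      by auto
    then have mI: "m \<in> {l<..<u}"
      using m(1) by auto
    have critical: "w' m = 0"
      by (rule DERIV_local_max[OF w'[OF mI], of "min (m - l) (u - m)"]) (use mI in \<open>auto intro!: m(2) simp: abs_less_iff\<close>)
    obtain y where "y \<in> {m<..(m + u) / 2}" "w m < w y"
      using critical_point_pos_second_deriv_increases[of m "(m + u) / 2" w w']
        w' w''[OF mI] convex_at_critical[OF mI pos critical] critical mI by fastforce
    then show False
      using m(2)[of y] mI by auto
  qed
  then show ?thesis
    using m(2)[OF t] by linarith
qed

locale radial_profile =
  fixes psi psi' psi'' z z' z'' :: "real \<Rightarrow> real" and a R1 R2 \<beta> B :: real
  assumes R: "0 < R1" "R1 < R2" "R2 < a"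
    and beta_pos: "0 < \<beta>"
    and psi_pos: "\<And>r. r \<in> {0..a} \<Longrightarrow> 0 < psi r"
    and psi_d1: "\<And>r. r \<in> {0..a} \<Longrightarrow> (psi has_real_derivative psi' r) (at r within {0..a})"
    and psi_d2: "\<And>r. r \<in> {0..a} \<Longrightarrow> (psi' has_real_derivative psi'' r) (at r within {0..a})"
    and psi''_cont: "continuous_on {0..a} psi''"
    and B_big: "\<And>r. r \<in> {0..a} \<Longrightarrow>
      \<bar>(psi'' r * psi r - psi' r * psi' r) / (psi r * psi r)\<bar> < B"
    and z_d1: "\<And>r. r \<in> {0..a} \<Longrightarrow> (z has_real_derivative z' r) (at r within {0..a})"
    and z_d2: "\<And>r. r \<in> {0..a} \<Longrightarrow> (z' has_real_derivative z'' r) (at r within {0..a})"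
    and z''_cont: "continuous_on {0..a} z''"
    and z_ode: "\<And>r. r \<in> {0..<R1} \<union> {R2<..a} \<Longrightarrow>
      ((\<lambda>s. (psi' s * z s + psi s * z' s) / psi s) has_real_derivative B * z r) (at r within {0..a})"
    and z_0: "z 0 = 0" "z' 0 = 1"
    and z_a: "z a = \<beta>" "z' a = -1"
    and z_mid_pos: "\<And>r. r \<in> {R1..R2} \<Longrightarrow> 0 < z r"
begin

lemma a_pos: "0 < a"
  using R by simp

lemma at_interior: "r \<in> {0<..<a} \<Longrightarrow> at r within {0..a} = at r"
  by (auto intro: at_within_Icc_at)

lemma z_at: "r \<in> {0<..<a} \<Longrightarrow> (z has_real_derivative z' r) (at r)"
  using z_d1[of r] at_interior[of r] by auto

lemma z'_at: "r \<in> {0<..<a} \<Longrightarrow> (z' has_real_derivative z'' r) (at r)"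
  using z_d2[of r] at_interior[of r] by auto

lemma z_cont: "continuous_on {0..a} z"
  using DERIV_continuous_on z_d1 by blast

definition kappa :: "real \<Rightarrow> real"
  where "kappa r = psi' r / psi r"

definition kappa' :: "real \<Rightarrow> real"
  where "kappa' r = (psi'' r * psi r - psi' r * psi' r) / (psi r * psi r)"

definition flux :: "real \<Rightarrow> real"
  where "flux r = z' r + kappa r * z r"

definition flux' :: "real \<Rightarrow> real"
  where "flux' r = z'' r + kappa r * z' r + kappa' r * z r"

lemma flux_has_derivative:
  assumes "r \<in> {0..a}"
  shows "(flux has_real_derivative flux' r) (at r within {0..a})"
proof -
  have "psi r \<noteq> 0"
    using psi_pos assms by force
  then have "(kappa has_real_derivative kappa' r) (at r within {0..a})"
    unfolding kappa_def[abs_def] kappa'_def using assms by (intro DERIV_divide psi_d1 psi_d2)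
  then show ?thesis
    unfolding flux_def[abs_def] flux'_def using assms
    by (auto intro!: derivative_eq_intros z_d1 z_d2 simp: algebra_simps)
qed

lemma flux_at: "r \<in> {0<..<a} \<Longrightarrow> (flux has_real_derivative flux' r) (at r)"
  using flux_has_derivative[of r] at_interior[of r] by auto

lemma flux_cont: "continuous_on {0..a} flux"
  using DERIV_continuous_on flux_has_derivative by blast

lemma flux'_cont: "continuous_on {0..a} flux'"
proof -
  have "continuous_on {0..a} z'" "continuous_on {0..a} psi" "continuous_on {0..a} psi'"
    using DERIV_continuous_on z_d2 psi_d1 psi_d2 by blast+
  then show ?thesis
    unfolding flux'_def[abs_def] kappa_def[abs_def] kappa'_def[abs_def] using psi_pos
    by (intro continuous_intros z''_cont z_cont psi''_cont) force+
qed

lemma flux'_eq_Bz: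
  assumes "r \<in> {0..<R1} \<union> {R2<..a}"
  shows "flux' r = B * z r"
proof -
  have r: "r \<in> {0..a}"
    using assms R by auto
  have "flux s = (psi' s * z s + psi s * z' s) / psi s" if "s \<in> {0..a}" for s
    using psi_pos[OF that] by (simp add: flux_def kappa_def field_simps)
  then have "((\<lambda>s. (psi' s * z s + psi s * z' s) / psi s) has_real_derivative flux' r)
      (at r within {0..a})"
    by (intro has_field_derivative_transform_within[OF flux_has_derivative[OF r] zero_less_one r])
  then show ?thesis
    using has_real_derivative_unique_Icc[OF a_pos r _ z_ode[OF assms]] by simp
qed

lemma convex_at_positive_critical_point:
  assumes "r \<in> {0..<R1} \<union> {R2<..a}" "0 < z r" "z' r = 0"
  shows "0 < z'' r"
proof -
  have r: "r \<in> {0..a}"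
    using assms(1) R by auto
  have "z'' r = (B - kappa' r) * z r"
    using flux'_eq_Bz[OF assms(1)] assms(3) by (simp add: flux'_def algebra_simps)
  moreover have "kappa' r < B"
    using B_big[OF r] abs_ge_self[of "kappa' r"] by (simp add: kappa'_def)
  ultimately show ?thesis
    using assms(2) by simp
qed

lemma z_pos:
  assumes "r \<in> {0<..a}"
  shows "0 < z r"
proof -
  have bounded_by_ends: "z t \<le> max 0 (max (z l) (z u))"
    if "0 \<le> l" "l < u" "u \<le> a" "{l<..<u} \<subseteq> {0..<R1} \<union> {R2<..a}" "t \<in> {l..u}" for l u t
  proof (rule max_principle_Icc[of l u z z' z'' t])
    show "continuous_on {l..u} z"
      using continuous_on_subset[OF z_cont] that by auto
  qed (use that z_at z'_at convex_at_positive_critical_point in auto)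
  consider "r < R1" | "r \<in> {R1..R2}" | "R2 < r" "r < a" | "r = a"
    using assms by force
  then show ?thesis
  proof cases
    case 1
    obtain d where d: "0 < d" "\<And>h. 0 < h \<Longrightarrow> h \<le> a \<Longrightarrow> h < d \<Longrightarrow> 0 < z h"
      using has_real_derivative_pos_inc_right[OF z_d1[of 0]] z_0 a_pos by auto
    define h where "h = min (d / 2) r"
    have "0 < z h"
      using d 1 assms R by (auto simp: h_def)
    also have "z h \<le> max 0 (max (z 0) (z r))"
      using bounded_by_ends[of 0 r h] 1 assms d(1) by (auto simp: h_def subset_iff)
    finally show ?thesis
      using z_0 by simp
  next
    case 2
    then show ?thesis
      using z_mid_pos by auto
  next
    case 3
    obtain d where d: "0 < d" "\<And>h. 0 < h \<Longrightarrow> h \<le> a \<Longrightarrow> h < d \<Longrightarrow> \<beta> < z (a - h)"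
      using has_real_derivative_neg_dec_left[OF z_d1[of a]] z_a a_pos by auto
    define h where "h = min (d / 2) (a - r)"
    have "\<beta> < z (a - h)"
      using d 3 R by (auto simp: h_def)
    also have "z (a - h) \<le> max 0 (max (z r) (z a))"
      using bounded_by_ends[of r a "a - h"] 3 R d(1) by (auto simp: h_def subset_iff)
    finally show ?thesis
      using z_a beta_pos by (auto simp: max_def split: if_splits)
  next
    case 4
    then show ?thesis
      using z_a beta_pos by simp
  qed
qed

definition Z :: "real \<Rightarrow> real"
  where "Z r = integral {0..r} z"

lemma Z_has_derivative: "r \<in> {0..a} \<Longrightarrow> (Z has_real_derivative z r) (at r within {0..a})"
  unfolding Z_def[abs_def] has_real_derivative_iff_has_vector_derivative
  by (rule integral_has_vector_derivative[OF z_cont])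

lemma Z_at: "r \<in> {0<..<a} \<Longrightarrow> (Z has_real_derivative z r) (at r)"
  using Z_has_derivative[of r] at_interior[of r] by auto

lemma Z_cont: "continuous_on {0..a} Z"
  using DERIV_continuous_on Z_has_derivative by blast

lemma Z_0 [simp]: "Z 0 = 0"
  by (simp add: Z_def)

lemma Z_strict_mono: "strict_mono_on {0..a} Z"
proof (rule strict_mono_onI)
  fix x y assume xy: "x \<in> {0..a}" "y \<in> {0..a}" "x < y"
  show "Z x < Z y"
  proof (rule DERIV_pos_imp_increasing_open[OF xy(3)])
    fix r assume "x < r" "r < y"
    then have "r \<in> {0<..<a}"
      using xy by auto
    then show "\<exists>d. (Z has_real_derivative d) (at r) \<and> 0 < d"
      using Z_at[of r] z_pos[of r] by auto
  next
    show "continuous_on {x..y} Z"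
      using continuous_on_subset[OF Z_cont] xy by auto
  qed
qed

lemma Z_less_iff: "x \<in> {0..a} \<Longrightarrow> y \<in> {0..a} \<Longrightarrow> Z x < Z y \<longleftrightarrow> x < y"
  using strict_mono_on_less[OF Z_strict_mono] .

lemma Z_a_pos: "0 < Z a"
  using Z_less_iff[of 0 a] a_pos by simp

lemma Z_image: "Z ` {0..a} = {0..Z a}"
proof
  show "Z ` {0..a} \<subseteq> {0..Z a}"
    using strict_mono_on_less_eq[OF Z_strict_mono, of 0] strict_mono_on_less_eq[OF Z_strict_mono, of _ a]
      a_pos by auto
  show "{0..Z a} \<subseteq> Z ` {0..a}"
  proof
    fix y assume "y \<in> {0..Z a}"
    then obtain r where "0 \<le> r" "r \<le> a" "Z r = y"
      using IVT'[of Z 0 y a] Z_cont a_pos by auto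
    then show "y \<in> Z ` {0..a}"
      by auto
  qed
qed

definition Z_inv :: "real \<Rightarrow> real"
  where "Z_inv = inv_into {0..a} Z"

lemma Z_inv_Z: "r \<in> {0..a} \<Longrightarrow> Z_inv (Z r) = r"
  unfolding Z_inv_def using strict_mono_on_imp_inj_on[OF Z_strict_mono] by simp

lemma Z_Z_inv: "y \<in> {0..Z a} \<Longrightarrow> Z (Z_inv y) = y"
  unfolding Z_inv_def using Z_image f_inv_into_f[of y Z "{0..a}"] by simp

lemma Z_inv_mem: "y \<in> {0..Z a} \<Longrightarrow> Z_inv y \<in> {0..a}"
  unfolding Z_inv_def using Z_image inv_into_into[of y Z "{0..a}"] by simp

lemma Z_inv_mem_interior:
  assumes "y \<in> {0<..<Z a}"
  shows "Z_inv y \<in> {0<..<a}"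
proof -
  have "Z_inv y \<in> {0..a}" "Z (Z_inv y) = y"
    using assms Z_inv_mem Z_Z_inv by auto
  moreover have "Z_inv y \<noteq> 0" "Z_inv y \<noteq> a"
    using calculation(2) assms by auto
  ultimately show ?thesis
    by auto
qed

lemma Z_inv_cont: "continuous_on {0..Z a} Z_inv"
  using continuous_on_inv[OF Z_cont compact_Icc] Z_inv_Z Z_image by auto

lemma Z_inv_has_derivative:
  assumes "y \<in> {0<..<Z a}"
  shows "(Z_inv has_real_derivative inverse (z (Z_inv y))) (at y)"
proof (rule DERIV_inverse_function[where f = Z and a = 0 and b = "Z a"])
  show "DERIV Z (Z_inv y) :> z (Z_inv y)" "z (Z_inv y) \<noteq> 0"
    using Z_at z_pos Z_inv_mem_interior[OF assms] by force+
  have "continuous_on {0<..<Z a} Z_inv"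
    by (rule continuous_on_subset[OF Z_inv_cont]) auto
  then show "isCont Z_inv y"
    using assms by (simp add: continuous_on_eq_continuous_at)
qed (use assms Z_Z_inv in auto)

lemma flux_minus_BZ_const:
  assumes "0 \<le> s" "s < t" "t \<le> a" "{s<..<t} \<subseteq> {0..<R1} \<union> {R2<..a}"
  shows "flux t - B * Z t = flux s - B * Z s"
proof (rule DERIV_isconst_end[OF assms(2)])
  show "continuous_on {s..t} (\<lambda>r. flux r - B * Z r)"
    using assms by (intro continuous_intros continuous_on_subset[OF flux_cont]
        continuous_on_subset[OF Z_cont]) auto
  fix r assume r: "s < r" "r < t"
  then have rI: "r \<in> {0<..<a}" and "flux' r = B * z r"
    using assms flux'_eq_Bz by auto
  then show "((\<lambda>r. flux r - B * Z r) has_real_derivative 0) (at r)"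
    using DERIV_diff[OF flux_at[OF rI] DERIV_cmult[OF Z_at[OF rI], of B]] by simp
qed

lemma flux_near_0: "r \<in> {0..R1} \<Longrightarrow> flux r = flux 0 + B * Z r"
  using flux_minus_BZ_const[of 0 r] R by (cases "r = 0") (auto simp: subset_iff)

lemma flux_near_a: "r \<in> {R2..a} \<Longrightarrow> flux r = flux a + B * (Z r - Z a)"
  using flux_minus_BZ_const[of r a] R by (cases "r = a") (auto simp: subset_iff algebra_simps)

lemma Z_R: "0 < Z R1" "Z R1 < Z R2" "Z R2 < Z a"
  using Z_less_iff[of 0 R1] Z_less_iff[of R1 R2] Z_less_iff[of R2 a] R by auto

text \<open>\<open>Z_inv\<close> is not differentiable at \<open>0\<close> (as \<open>z 0 = 0\<close>); the affine pieces, which agree with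
  \<open>- flux \<circ> Z_inv\<close> near the ends by \<open>flux_near_0\<close> and \<open>flux_near_a\<close>, make the nonlinearity
  \<open>C\<^sup>1\<close> nonetheless.\<close>

definition nonlinearity :: "real \<Rightarrow> real"
  where "nonlinearity y =
    (if y < Z R1 then - flux 0 - B * y
     else if Z R2 < y then - flux a - B * (y - Z a)
     else - flux (Z_inv y))"

definition nonlinearity' :: "real \<Rightarrow> real"
  where "nonlinearity' y = (if y \<in> {0<..<Z a} then - flux' (Z_inv y) / z (Z_inv y) else - B)"

lemma nonlinearity_Z:
  assumes r: "r \<in> {0..a}"
  shows "nonlinearity (Z r) = - flux r"
proof -
  have R': "R1 \<in> {0..a}" "R2 \<in> {0..a}"
    using R by auto
  consider "Z r < Z R1" | "Z R2 < Z r" | "\<not> Z r < Z R1" "\<not> Z R2 < Z r"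
    by blast
  then show ?thesis
  proof cases
    case 1
    then show ?thesis
      using Z_less_iff[OF r R'(1)] flux_near_0[of r] r by (simp add: nonlinearity_def)
  next
    case 2
    then show ?thesis
      using Z_less_iff[OF R'(2) r] flux_near_a[of r] r Z_R by (simp add: nonlinearity_def)
  next
    case 3
    then show ?thesis
      using Z_inv_Z[OF r] by (simp add: nonlinearity_def)
  qed
qed

lemma nonlinearity_eq_flux_Z_inv: "y \<in> {0..Z a} \<Longrightarrow> nonlinearity y = - flux (Z_inv y)"
  using nonlinearity_Z[of "Z_inv y"] Z_Z_inv Z_inv_mem by simp

lemma nonlinearity'_outer:
  assumes "y < Z R1 \<or> Z R2 < y"
  shows "nonlinearity' y = - B"
proof (cases "y \<in> {0<..<Z a}")
  case True
  define r where "r = Z_inv y"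
  have r: "r \<in> {0<..<a}" "Z r = y"
    using Z_inv_mem_interior[OF True] Z_Z_inv[of y] True by (auto simp: r_def)
  then have "r < R1 \<or> R2 < r"
    using assms Z_less_iff[of r R1] Z_less_iff[of R2 r] R by auto
  then have "flux' r = B * z r"
    using flux'_eq_Bz r by auto
  then show ?thesis
    using True z_pos[of r] r by (simp add: nonlinearity'_def r_def)
qed (auto simp: nonlinearity'_def)

lemma nonlinearity_has_derivative: "(nonlinearity has_real_derivative nonlinearity' y) (at y)"
proof -
  consider "y < Z R1" | "Z R2 < y" | "y \<in> {0<..<Z a}"
    using Z_R by fastforce
  then show ?thesis
  proof cases
    case 1
    have "((\<lambda>w. - flux 0 - B * w) has_real_derivative - B) (at y)"
      by (auto intro!: derivative_eq_intros)
    then have "(nonlinearity has_real_derivative - B) (at y)"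
      by (rule has_field_derivative_transform_within_open[of _ _ _ "{..<Z R1}"])
        (use 1 in \<open>auto simp: nonlinearity_def\<close>)
    then show ?thesis
      using nonlinearity'_outer 1 by simp
  next
    case 2
    have "((\<lambda>w. - flux a - B * (w - Z a)) has_real_derivative - B) (at y)"
      by (auto intro!: derivative_eq_intros)
    then have "(nonlinearity has_real_derivative - B) (at y)"
      by (rule has_field_derivative_transform_within_open[of _ _ _ "{Z R2<..}"])
        (use 2 Z_R in \<open>auto simp: nonlinearity_def\<close>)
    then show ?thesis
      using nonlinearity'_outer 2 by simp
  next
    case 3
    have r: "Z_inv y \<in> {0<..<a}"
      using Z_inv_mem_interior[OF 3] .
    have "((\<lambda>w. - flux (Z_inv w)) has_real_derivative
        - (flux' (Z_inv y) * inverse (z (Z_inv y)))) (at y)"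
      using DERIV_minus[OF DERIV_chain[OF flux_at[OF r] Z_inv_has_derivative[OF 3]]]
      by (simp add: o_def)
    then have "(nonlinearity has_real_derivative - (flux' (Z_inv y) * inverse (z (Z_inv y)))) (at y)"
      by (rule has_field_derivative_transform_within_open[of _ _ _ "{0<..<Z a}"])
        (use 3 nonlinearity_eq_flux_Z_inv in auto)
    then show ?thesis
      using 3 by (simp add: nonlinearity'_def divide_inverse)
  qed
qed

lemma nonlinearity'_cont: "continuous_on UNIV nonlinearity'"
proof (rule continuous_at_imp_continuous_on, intro ballI)
  fix y :: real
  have "continuous_on {..<Z R1} nonlinearity'" "continuous_on {Z R2<..} nonlinearity'"
    by (auto intro: continuous_on_eq[of _ "\<lambda>_. - B"] simp: nonlinearity'_outer)
  moreover have "continuous_on {0<..<Z a} nonlinearity'"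
  proof -
    have Z_inv': "continuous_on {0<..<Z a} Z_inv" "Z_inv ` {0<..<Z a} \<subseteq> {0..a}"
      by (auto intro: continuous_on_subset[OF Z_inv_cont] dest: Z_inv_mem_interior)
    have "continuous_on {0<..<Z a} (\<lambda>w. - flux' (Z_inv w) / z (Z_inv w))"
      using z_pos Z_inv_mem_interior
      by (intro continuous_intros continuous_on_compose2[OF flux'_cont Z_inv']
          continuous_on_compose2[OF z_cont Z_inv']) force
    then show ?thesis
      by (rule continuous_on_eq) (simp add: nonlinearity'_def)
  qed
  ultimately show "isCont nonlinearity' y"
    using Z_R by (cases "y < Z R1"; cases "Z R2 < y")
      (auto simp: continuous_on_eq_continuous_at not_less)
qed

lemma C1_nonlinearity: "C1_real nonlinearity"
  unfolding C1_real_def using nonlinearity_has_derivative nonlinearity'_cont by blast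

lemma stationary_solution_Z: "stationary_solution psi a nonlinearity (- \<beta> / Z a) (\<lambda>r \<theta>. Z r)"
  unfolding stationary_solution_def LB_laplacian_def
proof (intro conjI allI impI)
  fix r \<theta> :: real
  assume "0 < r \<and> r < a \<and> 0 < \<theta> \<and> \<theta> \<le> 2 * pi"
  then have r: "r \<in> {0<..<a}"
    by auto
  have deriv_Z: "deriv Z s = z s" if "s \<in> {0<..<a}" for s
    using Z_at[OF that] by (rule DERIV_imp_deriv)
  have deriv_Z_at: "(deriv Z has_real_derivative z' r) (at r)"
    by (rule has_field_derivative_transform_within_open[OF z_at[OF r] open_greaterThanLessThan r])
      (simp add: deriv_Z)
  show "Z differentiable (at r)" "deriv Z differentiable (at r)"
    using Z_at[OF r] deriv_Z_at by (auto simp: real_differentiable_def)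
  show "(\<lambda>t. Z r) differentiable (at \<theta>)" "deriv (\<lambda>t. Z r) differentiable (at \<theta>)"
    by simp_all
  have "deriv psi r = psi' r"
    using psi_d1[of r] at_interior[OF r] r by (auto intro: DERIV_imp_deriv)
  then show "deriv (deriv Z) r + deriv psi r / psi r * deriv Z r
      + 1 / (psi r)\<^sup>2 * deriv (\<lambda>s. deriv (\<lambda>t. Z r) s) \<theta> + nonlinearity (Z r) = 0"
    using DERIV_imp_deriv[OF deriv_Z_at] deriv_Z[OF r] nonlinearity_Z[of r] r
    by (simp add: flux_def kappa_def)
next
  show "\<exists>d. (Z has_real_derivative d) (at 0 within {0..a}) \<and> - d + - \<beta> / Z a * Z 0 = 0"
    using Z_has_derivative[of 0] a_pos z_0 by auto
  show "\<exists>d. (Z has_real_derivative d) (at a within {0..a}) \<and> d + - \<beta> / Z a * Z a = 0"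
    using Z_has_derivative[of a] a_pos z_a Z_a_pos by auto
qed

lemma boundary_terms_neg:
  defines "\<alpha> \<equiv> - \<beta> / Z a"
  shows "2 * pi * psi a * (- psi' a / psi a * \<alpha>^2 * (Z a)^2 + \<alpha> * Z a * nonlinearity (Z a)
      + \<alpha>^3 * (Z a)^2)
    + 2 * pi * psi 0 * (psi' 0 / psi 0 * \<alpha>^2 * (Z 0)^2 + \<alpha> * Z 0 * nonlinearity (Z 0)
      + \<alpha>^3 * (Z 0)^2) < 0"
proof -
  have psi_a: "0 < psi a"
    using psi_pos a_pos by simp
  have \<alpha>_Z_a: "\<alpha> * Z a = - \<beta>"
    using Z_a_pos by (simp add: \<alpha>_def)
  have \<alpha>_Z_a_sq: "\<alpha>^2 * (Z a)^2 = \<beta>^2"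
    using \<alpha>_Z_a by (metis power_mult_distrib power2_minus)
  have f_Z_a: "nonlinearity (Z a) = 1 - psi' a / psi a * \<beta>"
    using nonlinearity_Z[of a] a_pos z_a by (simp add: flux_def kappa_def)
  have "- psi' a / psi a * \<alpha>^2 * (Z a)^2 + \<alpha> * Z a * nonlinearity (Z a) + \<alpha>^3 * (Z a)^2
      = - psi' a / psi a * (\<alpha>^2 * (Z a)^2) + (\<alpha> * Z a) * nonlinearity (Z a)
        + \<alpha> * (\<alpha>^2 * (Z a)^2)"
    by (simp add: power3_eq_cube power2_eq_square algebra_simps)
  also have "\<dots> = - psi' a / psi a * \<beta>^2 + (- \<beta>) * (1 - psi' a / psi a * \<beta>) + \<alpha> * \<beta>^2"
    by (simp only: \<alpha>_Z_a_sq \<alpha>_Z_a f_Z_a)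
  also have "\<dots> = - \<beta> + \<alpha> * \<beta>^2"
    by (simp add: power2_eq_square algebra_simps)
  finally have "- psi' a / psi a * \<alpha>^2 * (Z a)^2 + \<alpha> * Z a * nonlinearity (Z a)
      + \<alpha>^3 * (Z a)^2 = - \<beta> + \<alpha> * \<beta>^2" .
  moreover have "\<alpha> < 0"
    using Z_a_pos beta_pos by (simp add: \<alpha>_def)
  then have "\<alpha> * \<beta>^2 - \<beta> < 0"
    using beta_pos by (smt (verit) mult_neg_pos zero_less_power)
  ultimately show ?thesis
    using psi_a by (simp add: mult_pos_neg)
qed

lemma stationary_profile:
  "\<exists>f. C1_real f \<and>
    (let Z = (\<lambda>r. integral {0..r} z);
         \<alpha> = - \<beta> / integral {0..a} z;
         L0 = 2 * pi * psi 0; La = 2 * pi * psi a;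
         Ha = - psi' a / psi a; H0 = psi' 0 / psi 0
     in stationary_solution psi a f \<alpha> (\<lambda>r \<theta>. Z r) \<and>
        La * (Ha * \<alpha>^2 * (Z a)^2 + \<alpha> * Z a * f (Z a) + \<alpha>^3 * (Z a)^2)
        + L0 * (H0 * \<alpha>^2 * (Z 0)^2 + \<alpha> * Z 0 * f (Z 0) + \<alpha>^3 * (Z 0)^2) < 0)"
  using C1_nonlinearity stationary_solution_Z boundary_terms_neg
  unfolding Let_def Z_def[symmetric] by blast

end

theorem lemma5p5:
  fixes psi psi' psi'' chi chi' z z' z'' :: "real \<Rightarrow> real"
    and r1 r2 a R1 R2 \<beta> B :: real
  assumes r_bounds: "r1 \<le> 0" "0 < a" "a \<le> r2"
    and psi_d1: "\<And>r. r \<in> {r1..r2} \<Longrightarrow> (psi has_real_derivative psi' r) (at r within {r1..r2})"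
    and psi_d2: "\<And>r. r \<in> {r1..r2} \<Longrightarrow> (psi' has_real_derivative psi'' r) (at r within {r1..r2})"
    and psi_C2: "continuous_on {r1..r2} psi''"
    and psi_pos: "\<And>r. r \<in> {r1..r2} \<Longrightarrow> psi r > 0"
    and chi_d: "\<And>r. r \<in> {r1..r2} \<Longrightarrow> (chi has_real_derivative chi' r) (at r within {r1..r2})"
    and unit_speed: "\<And>r. r \<in> {r1..r2} \<Longrightarrow> (psi' r)^2 + (chi' r)^2 = 1"
    and simple: "inj_on (\<lambda>r. (psi r, chi r)) {r1..r2}"
    and chi'_0: "chi' 0 > 0" and chi'_a: "chi' a > 0"
    and R: "0 < R1" "R1 < R2" "R2 < a"
    and beta_pos: "\<beta> > 0"
    and B_big: "\<And>r q. r \<in> {0..a} \<Longrightarrow>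
        ((\<lambda>s. psi' s / psi s) has_real_derivative q) (at r within {r1..r2}) \<Longrightarrow> \<bar>q\<bar> < B"
    and z_d1: "\<And>r. r \<in> {0..a} \<Longrightarrow> (z has_real_derivative z' r) (at r within {0..a})"
    and z_d2: "\<And>r. r \<in> {0..a} \<Longrightarrow> (z' has_real_derivative z'' r) (at r within {0..a})"
    and z_C2: "continuous_on {0..a} z''"
    and z1_ode: "\<And>r. r \<in> {0..<R1} \<Longrightarrow>
        ((\<lambda>s. (psi' s * z s + psi s * z' s) / psi s) has_real_derivative B * z r) (at r within {0..a})"
    and z1_init: "z 0 = 0" "z' 0 = 1"
    and z2_ode: "\<And>r. r \<in> {R2<..a} \<Longrightarrow>
        ((\<lambda>s. (psi' s * z s + psi s * z' s) / psi s) has_real_derivative B * z r) (at r within {0..a})"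
    and z2_init: "z a = \<beta>" "z' a = -1"
    and z3_pos: "\<And>r. r \<in> {R1..R2} \<Longrightarrow> z r > 0"
  shows "\<exists>f. C1_real f \<and>
    (let Z = (\<lambda>r. integral {0..r} z);
         \<alpha> = - \<beta> / integral {0..a} z;
         L0 = 2 * pi * psi 0; La = 2 * pi * psi a;
         Ha = - psi' a / psi a; H0 = psi' 0 / psi 0
     in stationary_solution psi a f \<alpha> (\<lambda>r \<theta>. Z r) \<and>
        La * (Ha * \<alpha>^2 * (Z a)^2 + \<alpha> * Z a * f (Z a) + \<alpha>^3 * (Z a)^2)
        + L0 * (H0 * \<alpha>^2 * (Z 0)^2 + \<alpha> * Z 0 * f (Z 0) + \<alpha>^3 * (Z 0)^2) < 0)"
proof -
  have sub: "{0..a} \<subseteq> {r1..r2}"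
    using r_bounds by auto
  interpret radial_profile psi psi' psi'' z z' z'' a R1 R2 \<beta> B
  proof
    show "(psi has_real_derivative psi' r) (at r within {0..a})"
      "(psi' has_real_derivative psi'' r) (at r within {0..a})" if "r \<in> {0..a}" for r
      using psi_d1[of r] psi_d2[of r] that sub by (auto intro: has_field_derivative_subset)
    show "\<bar>(psi'' r * psi r - psi' r * psi' r) / (psi r * psi r)\<bar> < B" if r: "r \<in> {0..a}" for r
    proof (rule B_big[OF r])
      show "((\<lambda>s. psi' s / psi s) has_real_derivative
          (psi'' r * psi r - psi' r * psi' r) / (psi r * psi r)) (at r within {r1..r2})"
        using r sub psi_pos[of r] by (intro DERIV_divide psi_d1 psi_d2) auto
    qed
  qed (use R beta_pos psi_pos psi_d1 psi_d2 psi_C2 sub z_d1 z_d2 z_C2 z1_ode z2_ode z1_init z2_init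
      z3_pos in \<open>auto intro: continuous_on_subset\<close>)
  show ?thesis
    by (rule stationary_profile)
qed

end
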